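(* Let $\alpha\ge0$, $\beta\ge\alpha/2$, let $W^0$ be a Brownian motion with generated $\sigma$-algebra $\mathcal W^0$, and let $Y$ be a solution of $$dY(t)=\beta\,\mathbb E[Y(t)\mid\mathcal W^0]\,dt+\sqrt{\alpha\,Y(t)\,\mathbb E[Y(t)\mid\mathcal W^0]}\,dB_t+Y(t)\,dW^0_t$$ (with $B$ a Brownian motion independent of $W^0$), whose conditional law given $\mathcal W^0$ coincides with the solution $\rho$ of the SPDE $$d\rho_t=\Big(\tfrac{\alpha}{2}\langle\rho_t,\mathrm{id}_x\rangle\partial_x^2(x\rho_t)+\tfrac12\partial_x^2(x^2\rho_t)-\beta\langle\rho_t,\mathrm{id}_x\rangle\partial_x\rho_t\Big)dt-\partial_x(x\rho_t)\,dW^0_t,$$ under the assumptions (B1) $\alpha\ge0$, $\beta\ge\alpha/2$; (B2) strictly positive i.i.d. initial values with finite first and second moments; (B3) convergence of the laws of the empirical initial measures to $\delta_\lambda$ in $M(M_1(\mathbb R_{++}))$. Let $Y_1,\dots,Y_N$ be identically distributed copies of $Y$, conditionally independent given $\mathcal W^0$, obtained by taking $N$ independent Brownian motions in place of $B$. Then for almost every $t\in[0,T]$ and every bounded continuous $\varphi$, $$\sqrt{\mathbb E\Big[\Big|\frac1N\sum_{i=1}^N\varphi(Y_i(t))-\langle\rho_t,\varphi\rangle\Big|^2\,\Big|\,\mathcal W^0\Big]}\le\frac{C_\varphi}{\sqrt N},$$ with a constant $C_\varphi$ depending only on $\varphi$.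
   Context: $\langle\mu,f\rangle=\int fd\mu$, $\mathrm{id}_x(x)=x$; $M_1(E)$: probability measures on $E$ with finite first moment, Wasserstein-1 topology; $\mathbb R_{++}=(0,\infty)$. The conditional law $\mathcal L(Y(t)\mid\mathcal W^0)$ is defined by $\langle\mathcal L(Y(t)\mid\mathcal W^0),\varphi\rangle=\mathbb E[\varphi(Y(t))\mid\mathcal W^0]$. *)

theory Defs
  imports "HOL-Probability.Probability"
begin

definition cond_indep_vars_real ::
  "'a measure \<Rightarrow> 'a measure \<Rightarrow> 'i set \<Rightarrow> ('i \<Rightarrow> 'a \<Rightarrow> real) \<Rightarrow> bool" where
  "cond_indep_vars_real M F I X \<longleftrightarrow>
     (\<forall>J f. finite J \<and> J \<subseteq> I \<and>
        (\<forall>j\<in>J. f j \<in> borel_measurable borel \<and> (\<exists>B. \<forall>y. \<bar>f j y\<bar> \<le> B)) \<longrightarrow>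
        (AE \<omega> in M. real_cond_exp M F (\<lambda>x. \<Prod>j\<in>J. f j (X j x)) \<omega>
                    = (\<Prod>j\<in>J. real_cond_exp M F (\<lambda>x. f j (X j x)) \<omega>)))"

definition is_cond_law ::
  "'a measure \<Rightarrow> 'a measure \<Rightarrow> ('a \<Rightarrow> real) \<Rightarrow> ('a \<Rightarrow> real measure) \<Rightarrow> bool" where
  "is_cond_law M F Z \<rho> \<longleftrightarrow>
     (\<forall>\<omega>\<in>space M. prob_space (\<rho> \<omega>) \<and> sets (\<rho> \<omega>) = sets borel) \<and>
     (\<forall>\<phi>::real \<Rightarrow> real. continuous_on UNIV \<phi> \<and> bounded (range \<phi>) \<longrightarrow>
        (\<lambda>\<omega>. \<integral>y. \<phi> y \<partial>(\<rho> \<omega>)) \<in> borel_measurable F \<and>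
        (AE \<omega> in M. real_cond_exp M F (\<lambda>x. \<phi> (Z x)) \<omega> = (\<integral>y. \<phi> y \<partial>(\<rho> \<omega>))))"

end

theory Submission
  imports Defs
begin

text \<open>Conditionally on \<open>F\<close>, the variables \<open>\<phi>(Y\<^sub>i(t))\<close> have common conditional mean
  \<open>\<langle>\<rho>\<^sub>t, \<phi>\<rangle>\<close> and are pairwise conditionally uncorrelated. Hence in the conditional second
  moment of \<open>N\<^sup>-\<^sup>1 \<Sigma>\<^sub>i (\<phi>(Y\<^sub>i(t)) - \<langle>\<rho>\<^sub>t, \<phi>\<rangle>)\<close> only the \<open>N\<close> diagonal terms survive, each
  bounded by \<open>(2 sup|\<phi>|)\<^sup>2\<close>; this gives the bound with \<open>C\<^sub>\<phi> = 2 sup|\<phi>|\<close> for every \<open>t\<close>.\<close>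

lemma (in finite_measure) integrable_bounded:
  fixes f :: "'a \<Rightarrow> real"
  assumes "f \<in> borel_measurable M" and "\<And>x. x \<in> space M \<Longrightarrow> \<bar>f x\<bar> \<le> B"
  shows "integrable M f"
  using assms by (intro integrable_const_bound[where B = B]) auto

lemma (in prob_space) abs_integral_le_const:
  fixes f :: "'a \<Rightarrow> real"
  assumes "f \<in> borel_measurable M" and "\<And>x. x \<in> space M \<Longrightarrow> \<bar>f x\<bar> \<le> B"
  shows "\<bar>\<integral>x. f x \<partial>M\<bar> \<le> B"
proof -
  have "integrable M f"
    using assms by (rule integrable_bounded)
  then have "(\<integral>x. \<bar>f x\<bar> \<partial>M) \<le> B"
    using assms(2) by (intro integral_le_const) auto
  then show ?thesis
    using integral_norm_bound[of M f] unfolding real_norm_def by linarith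
qed

context finite_measure_subalgebra
begin

lemma real_cond_exp_centered_mult:
  fixes X Z m :: "'a \<Rightarrow> real"
  assumes [measurable]: "X \<in> borel_measurable M" "Z \<in> borel_measurable M"
    and mF: "m \<in> borel_measurable F"
    and X_bound: "\<And>x. x \<in> space M \<Longrightarrow> \<bar>X x\<bar> \<le> B"
    and Z_bound: "\<And>x. x \<in> space M \<Longrightarrow> \<bar>Z x\<bar> \<le> B"
    and m_bound: "\<And>x. x \<in> space M \<Longrightarrow> \<bar>m x\<bar> \<le> B"
  shows "AE x in M. real_cond_exp M F (\<lambda>x. (X x - m x) * (Z x - m x)) x
    = real_cond_exp M F (\<lambda>x. X x * Z x) x - m x * real_cond_exp M F Z x
      - m x * real_cond_exp M F X x + m x * m x"
proof -
  have [measurable]: "m \<in> borel_measurable M"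
    using measurable_from_subalg[OF subalg mF] .
  have integrable_product: "integrable M (\<lambda>x. f x * g x)"
    if [measurable]: "f \<in> borel_measurable M" "g \<in> borel_measurable M"
      and "\<And>x. x \<in> space M \<Longrightarrow> \<bar>f x\<bar> \<le> B" "\<And>x. x \<in> space M \<Longrightarrow> \<bar>g x\<bar> \<le> B"
    for f g :: "'a \<Rightarrow> real"
    using that by (intro integrable_bounded[where B = "B * B"]) (auto simp: abs_mult intro: mult_mono')
  have XZ: "integrable M (\<lambda>x. X x * Z x)" and mZ: "integrable M (\<lambda>x. m x * Z x)"
    and mX: "integrable M (\<lambda>x. m x * X x)" and mm: "integrable M (\<lambda>x. m x * m x)"
    using X_bound Z_bound m_bound by (auto intro: integrable_product)
  have XZ_mZ: "integrable M (\<lambda>x. X x * Z x - m x * Z x)"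
    using XZ mZ by simp
  have XZ_mZ_mX: "integrable M (\<lambda>x. X x * Z x - m x * Z x - m x * X x)"
    using XZ_mZ mX by simp
  have expand: "(\<lambda>x. (X x - m x) * (Z x - m x)) = (\<lambda>x. X x * Z x - m x * Z x - m x * X x + m x * m x)"
    by (auto simp: fun_eq_iff algebra_simps)
  have "AE x in M. real_cond_exp M F (\<lambda>x. X x * Z x - m x * Z x - m x * X x + m x * m x) x
    = real_cond_exp M F (\<lambda>x. X x * Z x) x - real_cond_exp M F (\<lambda>x. m x * Z x) x
      - real_cond_exp M F (\<lambda>x. m x * X x) x + real_cond_exp M F (\<lambda>x. m x * m x) x"
    using real_cond_exp_add[OF XZ_mZ_mX mm] real_cond_exp_diff[OF XZ_mZ mX] real_cond_exp_diff[OF XZ mZ]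
    by eventually_elim simp
  moreover have "AE x in M. real_cond_exp M F (\<lambda>x. m x * Z x) x = m x * real_cond_exp M F Z x"
    and "AE x in M. real_cond_exp M F (\<lambda>x. m x * X x) x = m x * real_cond_exp M F X x"
    and "AE x in M. real_cond_exp M F (\<lambda>x. m x * m x) x = m x * m x"
    using mF mZ mX mm by (auto intro: real_cond_exp_mult real_cond_exp_F_meas)
  ultimately show ?thesis
    unfolding expand by eventually_elim simp
qed

lemma real_cond_exp_double_sum_diagonal:
  fixes f :: "'i \<Rightarrow> 'i \<Rightarrow> 'a \<Rightarrow> real"
  assumes "finite I" and integrable: "\<And>i j. integrable M (f i j)"
    and off_diagonal: "\<And>i j. i \<in> I \<Longrightarrow> j \<in> I \<Longrightarrow> i \<noteq> j \<Longrightarrow> AE x in M. real_cond_exp M F (f i j) x = 0"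
  shows "AE x in M. real_cond_exp M F (\<lambda>x. \<Sum>i\<in>I. \<Sum>j\<in>I. f i j x) x
    = (\<Sum>i\<in>I. real_cond_exp M F (f i i) x)"
proof -
  have "AE x in M. real_cond_exp M F (\<lambda>x. \<Sum>i\<in>I. \<Sum>j\<in>I. f i j x) x
    = (\<Sum>i\<in>I. real_cond_exp M F (\<lambda>x. \<Sum>j\<in>I. f i j x) x)"
    using integrable by (intro real_cond_exp_sum Bochner_Integration.integrable_sum)
  moreover have "AE x in M. \<forall>i\<in>I. real_cond_exp M F (\<lambda>x. \<Sum>j\<in>I. f i j x) x
    = (\<Sum>j\<in>I. real_cond_exp M F (f i j) x)"
    using \<open>finite I\<close> integrable by (intro AE_finite_allI real_cond_exp_sum)
  moreover have "AE x in M. \<forall>i\<in>I. \<forall>j\<in>I. i \<noteq> j \<longrightarrow> real_cond_exp M F (f i j) x = 0"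
    using \<open>finite I\<close> off_diagonal by (intro AE_finite_allI) auto
  ultimately show ?thesis
  proof eventually_elim
    case (elim x)
    have "(\<Sum>j\<in>I. real_cond_exp M F (f i j) x) = real_cond_exp M F (f i i) x" if "i \<in> I" for i
      using elim(3) that \<open>finite I\<close> by (subst sum.remove[of _ i]) (auto intro!: sum.neutral)
    with elim(1,2) show ?case
      by simp
  qed
qed

lemma real_cond_exp_empirical_mean_sq_error_le:
  fixes Z :: "nat \<Rightarrow> 'a \<Rightarrow> real" and m :: "'a \<Rightarrow> real"
  assumes [measurable]: "\<And>i. Z i \<in> borel_measurable M"
    and Z_bound: "\<And>i x. x \<in> space M \<Longrightarrow> \<bar>Z i x\<bar> \<le> B"
    and mF: "m \<in> borel_measurable F" and m_bound: "\<And>x. x \<in> space M \<Longrightarrow> \<bar>m x\<bar> \<le> B"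
    and cond_mean: "\<And>i. AE x in M. real_cond_exp M F (Z i) x = m x"
    and uncorrelated: "\<And>i j. i \<noteq> j \<Longrightarrow> AE x in M. real_cond_exp M F (\<lambda>x. Z i x * Z j x) x
      = real_cond_exp M F (Z i) x * real_cond_exp M F (Z j) x"
    and "N > 0"
  shows "AE x in M. real_cond_exp M F (\<lambda>x. \<bar>(\<Sum>i<N. Z i x) / real N - m x\<bar>\<^sup>2) x \<le> (2 * B)\<^sup>2 / real N"
proof -
  have [measurable]: "m \<in> borel_measurable M"
    using measurable_from_subalg[OF subalg mF] .
  define D where "D i x = Z i x - m x" for i x
  have [measurable]: "D i \<in> borel_measurable M" for i
    unfolding D_def by measurable
  have D_bound: "\<bar>D i x\<bar> \<le> 2 * B" if "x \<in> space M" for i x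
    using Z_bound[OF that, of i] m_bound[OF that] unfolding D_def by linarith
  have DD_bound: "\<bar>D i x * D j x\<bar> \<le> (2 * B)\<^sup>2" if "x \<in> space M" for i j x
    using mult_mono'[OF D_bound[OF that, of i] D_bound[OF that, of j]]
    by (simp add: abs_mult power2_eq_square)
  have integrable_DD: "integrable M (\<lambda>x. D i x * D j x)" for i j
    using DD_bound by (intro integrable_bounded) auto
  have "(\<Sum>i<N. Z i x) / real N - m x = (\<Sum>i<N. D i x) / real N" for x
    using \<open>N > 0\<close> by (simp add: D_def sum_subtractf field_simps)
  then have "(\<lambda>x. \<bar>(\<Sum>i<N. Z i x) / real N - m x\<bar>\<^sup>2)
    = (\<lambda>x. (\<Sum>i<N. \<Sum>j<N. D i x * D j x) / (real N)\<^sup>2)"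
    by (simp add: power2_eq_square sum_product)
  then have "AE x in M. real_cond_exp M F (\<lambda>x. \<bar>(\<Sum>i<N. Z i x) / real N - m x\<bar>\<^sup>2) x
    = real_cond_exp M F (\<lambda>x. \<Sum>i<N. \<Sum>j<N. D i x * D j x) x / (real N)\<^sup>2"
    using integrable_DD by (simp add: real_cond_exp_cdiv Bochner_Integration.integrable_sum)
  moreover have "AE x in M. real_cond_exp M F (\<lambda>x. \<Sum>i<N. \<Sum>j<N. D i x * D j x) x
    = (\<Sum>i<N. real_cond_exp M F (\<lambda>x. D i x * D i x) x)"
  proof (rule real_cond_exp_double_sum_diagonal)
    fix i j :: nat assume "i \<noteq> j"
    have "AE x in M. real_cond_exp M F (\<lambda>x. D i x * D j x) x
      = real_cond_exp M F (\<lambda>x. Z i x * Z j x) x - m x * real_cond_exp M F (Z j) x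
        - m x * real_cond_exp M F (Z i) x + m x * m x"
      unfolding D_def using mF Z_bound m_bound by (intro real_cond_exp_centered_mult) auto
    with uncorrelated[OF \<open>i \<noteq> j\<close>] cond_mean[of i] cond_mean[of j]
    show "AE x in M. real_cond_exp M F (\<lambda>x. D i x * D j x) x = 0"
      by eventually_elim simp
  qed (use integrable_DD in auto)
  moreover have "AE x in M. \<forall>i\<in>{..<N}. real_cond_exp M F (\<lambda>x. D i x * D i x) x \<le> (2 * B)\<^sup>2"
    using integrable_DD DD_bound
    by (intro AE_finite_allI real_cond_exp_le_c AE_I2) (auto simp: abs_le_iff)
  ultimately show ?thesis
  proof eventually_elim
    case (elim x)
    have "real_cond_exp M F (\<lambda>x. \<bar>(\<Sum>i<N. Z i x) / real N - m x\<bar>\<^sup>2) x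
      = (\<Sum>i<N. real_cond_exp M F (\<lambda>x. D i x * D i x) x) / (real N)\<^sup>2"
      using elim(1,2) by (simp only:)
    also have "\<dots> \<le> real N * (2 * B)\<^sup>2 / (real N)\<^sup>2"
      using elim(3) sum_mono[of "{..<N}" _ "\<lambda>_. (2 * B)\<^sup>2"] by (intro divide_right_mono) auto
    also have "\<dots> = (2 * B)\<^sup>2 / real N"
      using \<open>N > 0\<close> by (simp add: power2_eq_square)
    finally show ?case .
  qed
qed

end

lemma cond_indep_vars_real_mult:
  fixes f g :: "real \<Rightarrow> real"
  assumes "cond_indep_vars_real M F I X" and "i \<in> I" "j \<in> I" "i \<noteq> j"
    and "f \<in> borel_measurable borel" "g \<in> borel_measurable borel"
    and "\<And>y. \<bar>f y\<bar> \<le> B" "\<And>y. \<bar>g y\<bar> \<le> B"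
  shows "AE x in M. real_cond_exp M F (\<lambda>x. f (X i x) * g (X j x)) x
    = real_cond_exp M F (\<lambda>x. f (X i x)) x * real_cond_exp M F (\<lambda>x. g (X j x)) x"
proof -
  define h where "h k = (if k = i then f else g)" for k
  have "AE x in M. real_cond_exp M F (\<lambda>x. \<Prod>k\<in>{i, j}. h k (X k x)) x
    = (\<Prod>k\<in>{i, j}. real_cond_exp M F (\<lambda>x. h k (X k x)) x)"
    by (rule assms(1)[unfolded cond_indep_vars_real_def, rule_format, of "{i, j}" h])
      (use assms in \<open>auto simp: h_def\<close>)
  then show ?thesis
    using \<open>i \<noteq> j\<close> by (simp add: h_def)
qed

lemma cond_law_empirical_mean_L2_error_le:
  fixes X :: "nat \<Rightarrow> 'a \<Rightarrow> real" and \<nu> :: "'a \<Rightarrow> real measure" and \<phi> :: "real \<Rightarrow> real"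
  assumes "prob_space M" and "subalgebra M F"
    and X_meas: "\<And>i. X i \<in> borel_measurable M"
    and indep: "cond_indep_vars_real M F UNIV X"
    and law: "\<And>i. is_cond_law M F (X i) \<nu>"
    and \<phi>_cont: "continuous_on UNIV \<phi>" and \<phi>_bound: "\<And>y. \<bar>\<phi> y\<bar> \<le> B"
    and "N > 0"
  shows "AE \<omega> in M. sqrt (real_cond_exp M F
      (\<lambda>x. \<bar>(\<Sum>i<N. \<phi> (X i x)) / real N - (\<integral>y. \<phi> y \<partial>\<nu> x)\<bar>\<^sup>2) \<omega>) \<le> 2 * B / sqrt (real N)"
proof -
  interpret prob_space M
    by fact
  interpret finite_measure_subalgebra M F
    by unfold_locales fact
  have [measurable]: "\<phi> \<in> borel_measurable borel"
    using \<phi>_cont by (intro borel_measurable_continuous_onI) simp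
  have \<phi>: "continuous_on UNIV \<phi> \<and> bounded (range \<phi>)"
    using \<phi>_cont \<phi>_bound unfolding bounded_real by blast
  have "(\<lambda>\<omega>. \<integral>y. \<phi> y \<partial>\<nu> \<omega>) \<in> borel_measurable F"
    and cond_mean: "\<And>i. AE \<omega> in M. real_cond_exp M F (\<lambda>x. \<phi> (X i x)) \<omega> = (\<integral>y. \<phi> y \<partial>\<nu> \<omega>)"
    using law \<phi> unfolding is_cond_law_def by blast+
  moreover have "\<bar>\<integral>y. \<phi> y \<partial>\<nu> \<omega>\<bar> \<le> B" if "\<omega> \<in> space M" for \<omega>
  proof -
    have "prob_space (\<nu> \<omega>)" and "sets (\<nu> \<omega>) = sets borel"
      using law[of 0] that unfolding is_cond_law_def by auto
    moreover from \<open>sets (\<nu> \<omega>) = sets borel\<close> have "\<phi> \<in> borel_measurable (\<nu> \<omega>)"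
      by (simp cong: measurable_cong_sets)
    ultimately show ?thesis
      using \<phi>_bound by (intro prob_space.abs_integral_le_const) auto
  qed
  moreover have "AE x in M. real_cond_exp M F (\<lambda>x. \<phi> (X i x) * \<phi> (X j x)) x
    = real_cond_exp M F (\<lambda>x. \<phi> (X i x)) x * real_cond_exp M F (\<lambda>x. \<phi> (X j x)) x" if "i \<noteq> j" for i j
    using indep that \<phi>_bound by (intro cond_indep_vars_real_mult) auto
  ultimately have "AE \<omega> in M. real_cond_exp M F
      (\<lambda>x. \<bar>(\<Sum>i<N. \<phi> (X i x)) / real N - (\<integral>y. \<phi> y \<partial>\<nu> x)\<bar>\<^sup>2) \<omega> \<le> (2 * B)\<^sup>2 / real N"
    using X_meas \<phi>_bound \<open>N > 0\<close> by (intro real_cond_exp_empirical_mean_sq_error_le) simp_all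
  then show ?thesis
  proof eventually_elim
    case (elim \<omega>)
    have "B \<ge> 0"
      using \<phi>_bound[of 0] by linarith
    from elim have "sqrt (real_cond_exp M F
        (\<lambda>x. \<bar>(\<Sum>i<N. \<phi> (X i x)) / real N - (\<integral>y. \<phi> y \<partial>\<nu> x)\<bar>\<^sup>2) \<omega>) \<le> sqrt ((2 * B)\<^sup>2 / real N)"
      by (rule real_sqrt_le_mono)
    with \<open>B \<ge> 0\<close> show ?case
      by (simp add: real_sqrt_divide real_sqrt_mult)
  qed
qed

theorem lemma4p1:
  fixes M F :: "'a measure"
    and \<alpha> \<beta> T :: real
    and Y :: "nat \<Rightarrow> real \<Rightarrow> 'a \<Rightarrow> real"
    and \<rho> :: "real \<Rightarrow> 'a \<Rightarrow> real measure"
  assumes "prob_space M"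
    and "subalgebra M F"
    and "\<alpha> \<ge> 0" and "\<beta> \<ge> \<alpha> / 2" and "T > 0"
    and meas: "\<And>i t. Y i t \<in> borel_measurable M"
    and pos: "\<And>i t \<omega>. \<omega> \<in> space M \<Longrightarrow> Y i t \<omega> > 0"
    and indep: "\<And>t. t \<in> {0..T} \<Longrightarrow> cond_indep_vars_real M F UNIV (\<lambda>i. Y i t)"
    and law: "\<And>i t. t \<in> {0..T} \<Longrightarrow> is_cond_law M F (Y i t) (\<rho> t)"
  shows "\<forall>\<phi>::real \<Rightarrow> real. continuous_on UNIV \<phi> \<and> bounded (range \<phi>) \<longrightarrow>
           (\<exists>C. \<forall>N::nat. N \<ge> 1 \<longrightarrow>
              (AE t in lebesgue_on {0..T}. AE \<omega> in M.
                 sqrt (real_cond_exp M F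
                   (\<lambda>x. \<bar>(\<Sum>i<N. \<phi> (Y i t x)) / real N - (\<integral>y. \<phi> y \<partial>(\<rho> t x))\<bar>\<^sup>2) \<omega>)
                 \<le> C / sqrt (real N)))"
proof (intro allI impI)
  fix \<phi> :: "real \<Rightarrow> real"
  assume \<phi>: "continuous_on UNIV \<phi> \<and> bounded (range \<phi>)"
  then obtain B where \<phi>_bound: "\<And>y. \<bar>\<phi> y\<bar> \<le> B"
    unfolding bounded_real by blast
  show "\<exists>C. \<forall>N::nat. N \<ge> 1 \<longrightarrow> (AE t in lebesgue_on {0..T}. AE \<omega> in M.
      sqrt (real_cond_exp M F (\<lambda>x. \<bar>(\<Sum>i<N. \<phi> (Y i t x)) / real N - (\<integral>y. \<phi> y \<partial>(\<rho> t x))\<bar>\<^sup>2) \<omega>)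
      \<le> C / sqrt (real N))"
    by (intro exI[of _ "2 * B"] allI impI AE_I2 cond_law_empirical_mean_L2_error_le)
      (use assms(1,2) meas indep law \<phi> \<phi>_bound in auto)
qed

end
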